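(* Let $p$ be a prime and $G$ a $p$-group of order $p^m$ with $|G/Z(G)|=p^3$. (1) If $G$ has no abelian maximal subgroup, then $$B_G(t)=\frac{1-p^{m-5}t}{(1-p^{m-2}t)(1-p^{m-3}t)}.$$ (2) If $G$ possesses an abelian maximal subgroup, then $$B_G(t)=\frac{1}{1-p^{m-3}t}\left(1+\frac{(p^{m-2}-p^{m-4})t}{1-p^{m-1}t}+\frac{(p^{m-2}-p^{m-3})t}{1-p^{m-2}t}\right).$$
   Context: For a finite group $G$ and $n\ge0$, let $G^{(n)}=\{(x_1,\dots,x_n)\in G^n: x_ix_j=x_jx_i\ \forall i,j\}$, on which $G$ acts by simultaneous conjugation; let $\beta_{G,n}$ be the number of orbits and $B_G(t)=\sum_{n\ge0}\beta_{G,n}t^n$, viewed as a rational function of $t$. *)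

theory Defs
  imports "HOL-Algebra.Algebra" "HOL-Computational_Algebra.Formal_Power_Series"
begin

definition group_center :: "('a, 'b) monoid_scheme \<Rightarrow> 'a set" where
  "group_center G = {z \<in> carrier G. \<forall>g \<in> carrier G. z \<otimes>\<^bsub>G\<^esub> g = g \<otimes>\<^bsub>G\<^esub> z}"

definition maximal_subgroup :: "'a set \<Rightarrow> ('a, 'b) monoid_scheme \<Rightarrow> bool" where
  "maximal_subgroup H G \<longleftrightarrow> subgroup H G \<and> H \<noteq> carrier G \<and>
     (\<forall>K. subgroup K G \<and> H \<subseteq> K \<and> K \<noteq> carrier G \<longrightarrow> K = H)"

definition abelian_set :: "'a set \<Rightarrow> ('a, 'b) monoid_scheme \<Rightarrow> bool" where
  "abelian_set H G \<longleftrightarrow> (\<forall>x\<in>H. \<forall>y\<in>H. x \<otimes>\<^bsub>G\<^esub> y = y \<otimes>\<^bsub>G\<^esub> x)"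

definition comm_tuples :: "('a, 'b) monoid_scheme \<Rightarrow> nat \<Rightarrow> (nat \<Rightarrow> 'a) set" where
  "comm_tuples G n = {x \<in> {..<n} \<rightarrow>\<^sub>E carrier G.
     \<forall>i<n. \<forall>j<n. x i \<otimes>\<^bsub>G\<^esub> x j = x j \<otimes>\<^bsub>G\<^esub> x i}"

definition conj_tuple :: "('a, 'b) monoid_scheme \<Rightarrow> nat \<Rightarrow> 'a \<Rightarrow> (nat \<Rightarrow> 'a) \<Rightarrow> (nat \<Rightarrow> 'a)" where
  "conj_tuple G n g x = (\<lambda>i\<in>{..<n}. g \<otimes>\<^bsub>G\<^esub> x i \<otimes>\<^bsub>G\<^esub> inv\<^bsub>G\<^esub> g)"

definition conj_orbit :: "('a, 'b) monoid_scheme \<Rightarrow> nat \<Rightarrow> (nat \<Rightarrow> 'a) \<Rightarrow> (nat \<Rightarrow> 'a) set" where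
  "conj_orbit G n x = (\<lambda>g. conj_tuple G n g x) ` carrier G"

definition beta :: "('a, 'b) monoid_scheme \<Rightarrow> nat \<Rightarrow> nat" where
  "beta G n = card (conj_orbit G n ` comm_tuples G n)"

definition B_series :: "('a, 'b) monoid_scheme \<Rightarrow> rat fps" where
  "B_series G = Abs_fps (\<lambda>n. of_nat (beta G n))"

end

theory Submission
  imports Defs
begin

unbundle fps_syntax

lemma fps_one_minus_const_X_mult_nth:
  "((1 - fps_const (c::'a::comm_ring_1) * fps_X) * f) $ n = f $ n - (if n = 0 then 0 else c * f $ (n - 1))"
proof -
  have "(1 - fps_const c * fps_X) * f = f - fps_const c * (fps_X * f)"
    by (simp add: algebra_simps)
  then show ?thesis
    by simp
qed

lemma fps_inverse_one_minus_const_X: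
  "inverse (1 - fps_const (c::'a::field) * fps_X) = Abs_fps (\<lambda>n. c ^ n)"
proof (rule fps_inverse_unique)
  have "((1 - fps_const c * fps_X) * Abs_fps (\<lambda>n. c ^ n)) $ n = 1 $ n" for n
    by (cases n) (simp_all add: fps_one_minus_const_X_mult_nth)
  then show "(1 - fps_const c * fps_X) * Abs_fps (\<lambda>n. c ^ n) = 1"
    by (rule fps_ext)
qed

lemma fps_divide_one_minus_const_X:
  "f / (1 - fps_const (c::'a::field) * fps_X) = f * Abs_fps (\<lambda>n. c ^ n)"
  by (simp add: fps_divide_unit fps_inverse_one_minus_const_X)

lemma fps_linear_recurrence:
  fixes b c :: "nat \<Rightarrow> 'a::field"
  assumes "b 0 = 1" and "\<And>n. b (Suc n) = a * b n + c n"
  shows "Abs_fps b = (1 + fps_X * Abs_fps c) * Abs_fps (\<lambda>n. a ^ n)"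
proof -
  let ?D = "1 - fps_const a * fps_X"
  have "\<forall>n. (?D * Abs_fps b) $ n = (1 + fps_X * Abs_fps c) $ n"
  proof
    fix n show "(?D * Abs_fps b) $ n = (1 + fps_X * Abs_fps c) $ n"
      by (cases n) (simp_all add: fps_one_minus_const_X_mult_nth assms)
  qed
  then have recurrence: "?D * Abs_fps b = 1 + fps_X * Abs_fps c"
    by (simp add: fps_eq_iff)
  have "Abs_fps b = inverse ?D * ?D * Abs_fps b"
    by (simp add: inverse_mult_eq_1)
  also have "\<dots> = inverse ?D * (1 + fps_X * Abs_fps c)"
    by (simp only: mult.assoc recurrence)
  also have "\<dots> = (1 + fps_X * Abs_fps c) * Abs_fps (\<lambda>n. a ^ n)"
    unfolding fps_inverse_one_minus_const_X by (rule mult.commute)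
  finally show ?thesis .
qed

lemma fps_recurrence_geometric:
  fixes b :: "nat \<Rightarrow> 'a::field"
  assumes "b 0 = 1" and "\<And>n. b (Suc n) = a * b n + (r - s) * r ^ n"
  shows "Abs_fps b = (1 - fps_const s * fps_X) / ((1 - fps_const r * fps_X) * (1 - fps_const a * fps_X))"
proof -
  have "(1 + fps_X * Abs_fps (\<lambda>n. (r - s) * r ^ n)) $ n = ((1 - fps_const s * fps_X) * Abs_fps (\<lambda>n. r ^ n)) $ n" for n
    unfolding fps_one_minus_const_X_mult_nth by (cases n) (simp_all add: algebra_simps)
  then have "1 + fps_X * Abs_fps (\<lambda>n. (r - s) * r ^ n) = (1 - fps_const s * fps_X) * Abs_fps (\<lambda>n. r ^ n)"
    by (rule fps_ext)
  then show ?thesis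
    by (simp add: fps_linear_recurrence[of b a "\<lambda>n. (r - s) * r ^ n", OF assms] fps_divide_unit fps_inverse_mult
                  fps_inverse_one_minus_const_X mult.assoc)
qed

lemma fps_recurrence_two_geometric:
  fixes b :: "nat \<Rightarrow> 'a::field"
  assumes "b 0 = 1" and "\<And>n. b (Suc n) = a * b n + (u * P ^ n + v * r ^ n)"
  shows "Abs_fps b = 1 / (1 - fps_const a * fps_X) *
           (1 + fps_const u * fps_X / (1 - fps_const P * fps_X)
              + fps_const v * fps_X / (1 - fps_const r * fps_X))"
proof -
  have "Abs_fps (\<lambda>n. u * P ^ n + v * r ^ n)
          = fps_const u * Abs_fps (\<lambda>n. P ^ n) + fps_const v * Abs_fps (\<lambda>n. r ^ n)"
    by (simp add: fps_eq_iff)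
  then show ?thesis
    unfolding fps_divide_one_minus_const_X
      fps_linear_recurrence[of b a "\<lambda>n. u * P ^ n + v * r ^ n", OF assms]
    by (simp add: algebra_simps)
qed

definition centralizer :: "('a, 'b) monoid_scheme \<Rightarrow> 'a set \<Rightarrow> 'a set" where
  "centralizer G S = {h \<in> carrier G. \<forall>s\<in>S. h \<otimes>\<^bsub>G\<^esub> s = s \<otimes>\<^bsub>G\<^esub> h}"

lemma group_center_eq_centralizer: "group_center G = centralizer G (carrier G)"
  unfolding group_center_def centralizer_def by auto

context group
begin

lemma inv_mult_cancel_left [simp]: "x \<in> carrier G \<Longrightarrow> y \<in> carrier G \<Longrightarrow> inv x \<otimes> (x \<otimes> y) = y"
  by (simp add: m_assoc[symmetric])

lemma mult_inv_cancel_left [simp]: "x \<in> carrier G \<Longrightarrow> y \<in> carrier G \<Longrightarrow> x \<otimes> (inv x \<otimes> y) = y"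
  by (simp add: m_assoc[symmetric])

lemma conj_eq_self_iff:
  assumes "g \<in> carrier G" "x \<in> carrier G"
  shows "g \<otimes> x \<otimes> inv g = x \<longleftrightarrow> g \<otimes> x = x \<otimes> g"
proof -
  have "x = g \<otimes> x \<otimes> inv g \<longleftrightarrow> g \<otimes> x = x \<otimes> g"
    using assms by (simp add: inv_solve_right)
  then show ?thesis
    by auto
qed

lemma inv_comm:
  assumes "a \<in> carrier G" "s \<in> carrier G" "a \<otimes> s = s \<otimes> a"
  shows "inv a \<otimes> s = s \<otimes> inv a"
proof -
  have "inv a \<otimes> s = inv a \<otimes> (s \<otimes> a) \<otimes> inv a"
    using assms by (simp add: m_assoc)
  also have "\<dots> = inv a \<otimes> (a \<otimes> s) \<otimes> inv a"
    using assms(3) by simp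
  also have "\<dots> = s \<otimes> inv a"
    using assms(1,2) by (simp add: m_assoc)
  finally show ?thesis .
qed

lemma subgroup_centralizer:
  assumes "S \<subseteq> carrier G"
  shows "subgroup (centralizer G S) G"
proof (rule subgroupI)
  fix a b assume a: "a \<in> centralizer G S" and b: "b \<in> centralizer G S"
  show "inv a \<in> centralizer G S"
    using a assms by (auto simp: centralizer_def inv_comm)
  have "a \<otimes> b \<otimes> s = s \<otimes> (a \<otimes> b)" if "s \<in> S" for s
  proof -
    have "a \<otimes> b \<otimes> s = a \<otimes> (s \<otimes> b)"
      using a b that assms by (auto simp: centralizer_def m_assoc)
    also have "\<dots> = s \<otimes> (a \<otimes> b)"
      using a b that assms by (auto simp: centralizer_def m_assoc[symmetric])
    finally show ?thesis .
  qed
  then show "a \<otimes> b \<in> centralizer G S"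
    using a b by (auto simp: centralizer_def)
qed (use assms in \<open>auto simp: centralizer_def subset_iff intro!: exI[of _ \<one>]\<close>)

lemma subgroup_group_center: "subgroup (group_center G) G"
  by (simp add: group_center_eq_centralizer subgroup_centralizer)

lemma centralizer_eq_carrier_iff:
  "g \<in> carrier G \<Longrightarrow> centralizer G {g} = carrier G \<longleftrightarrow> g \<in> group_center G"
  unfolding centralizer_def group_center_def by force

lemma normalizerI_finite:
  assumes H: "subgroup H G" "finite H" and g: "g \<in> carrier G"
    and conj: "\<And>h. h \<in> H \<Longrightarrow> g \<otimes> h \<otimes> inv g \<in> H"
  shows "g \<in> normalizer G H"
proof -
  have Hc: "H \<subseteq> carrier G" using subgroup.subset[OF H(1)] .
  have image: "(g <# H) #> inv g = (\<lambda>h. g \<otimes> h \<otimes> inv g) ` H"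
    unfolding l_coset_def r_coset_def by auto
  have "inj_on (\<lambda>h. g \<otimes> h \<otimes> inv g) H"
    using Hc g by (intro inj_onI) (auto intro: conjugation_is_inj)
  then have "(\<lambda>h. g \<otimes> h \<otimes> inv g) ` H = H"
    using conj H(2) by (intro endo_inj_surj) auto
  then show ?thesis
    using g Hc image unfolding normalizer_def stabilizer_def by simp
qed

end

lemma group_actionI:
  fixes G (structure)
  assumes "group G"
    and ext: "\<And>g. g \<in> carrier G \<Longrightarrow> \<phi> g \<in> extensional E"
    and closed: "\<And>g x. g \<in> carrier G \<Longrightarrow> x \<in> E \<Longrightarrow> \<phi> g x \<in> E"
    and mult: "\<And>g h x. g \<in> carrier G \<Longrightarrow> h \<in> carrier G \<Longrightarrow> x \<in> E \<Longrightarrow> \<phi> (g \<otimes> h) x = \<phi> g (\<phi> h x)"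
    and one: "\<And>x. x \<in> E \<Longrightarrow> \<phi> \<one> x = x"
  shows "group_action G E \<phi>"
proof -
  interpret group G by fact
  have inv_cancel: "\<phi> (inv g) (\<phi> g x) = x" "\<phi> g (\<phi> (inv g) x) = x"
    if "g \<in> carrier G" "x \<in> E" for g x
    using mult[of "inv g" g x] mult[of g "inv g" x] one[of x] that by simp_all
  have bij: "\<phi> g \<in> carrier (BijGroup E)" if "g \<in> carrier G" for g
    using that ext closed inv_cancel
    by (auto simp: BijGroup_def Bij_def intro!: bij_betwI[where g = "\<phi> (inv g)"])
  have "\<phi> (g \<otimes> h) = \<phi> g \<otimes>\<^bsub>BijGroup E\<^esub> \<phi> h" if "g \<in> carrier G" "h \<in> carrier G" for g h
    using that bij ext mult
    by (auto simp: BijGroup_def compose_def intro!: extensionalityI[where A = E])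
  then have "\<phi> \<in> hom G (BijGroup E)"
    using bij by (intro homI) auto
  then show ?thesis
    by (simp add: group_action_def group_hom_def group_hom_axioms_def group_BijGroup)
qed

lemma (in group) rcosets_action:
  assumes "subgroup H G"
  shows "group_action G (rcosets H) (\<lambda>g. \<lambda>C \<in> rcosets H. C #> inv g)"
proof (rule group_actionI[OF is_group])
  have sub: "C \<subseteq> carrier G" if "C \<in> rcosets H" for C
    using rcosets_part_G[OF assms] that by blast
  show "(\<lambda>C \<in> rcosets H. C #> inv g) \<in> extensional (rcosets H)" for g
    by simp
  show "(\<lambda>C \<in> rcosets H. C #> inv g) C \<in> rcosets H" if "g \<in> carrier G" "C \<in> rcosets H" for g C
    using that subgroup.subset[OF assms]
    by (auto simp: RCOSETS_def coset_mult_assoc intro!: rcosetsI)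
  show "(\<lambda>C \<in> rcosets H. C #> inv (g \<otimes> h)) C
          = (\<lambda>C \<in> rcosets H. C #> inv g) ((\<lambda>C \<in> rcosets H. C #> inv h) C)"
    if "g \<in> carrier G" "h \<in> carrier G" "C \<in> rcosets H" for g h C
    using that sub subgroup.subset[OF assms]
    by (auto simp: RCOSETS_def coset_mult_assoc inv_mult_group intro!: rcosetsI)
  show "(\<lambda>C \<in> rcosets H. C #> inv \<one>) C = C" if "C \<in> rcosets H" for C
    using that sub by simp
qed

lemma (in group_action) prime_dvd_card_non_fixed_points:
  assumes "finite E" "order G = p ^ k" "Factorial_Ring.prime p"
  shows "p dvd card {x \<in> E. \<exists>g \<in> carrier G. \<phi> g x \<noteq> x}"
proof -
  interpret group G
    using group_hom group_hom.axioms(1) by auto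
  let ?moved = "\<lambda>x. \<exists>g \<in> carrier G. \<phi> g x \<noteq> x"
  let ?count = "\<lambda>B. \<Sum>y \<in> B. if ?moved y then 1 else 0"
  have orbit_dvd: "p dvd ?count (orbit G \<phi> x)" if x: "x \<in> E" for x
  proof (cases "?moved x")
    case False
    then have "orbit G \<phi> x = {x}"
      using x orbit_refl by (auto simp: orbit_def)
    then show ?thesis
      using False by simp
  next
    case True
    then obtain g where g: "g \<in> carrier G" "\<phi> g x \<noteq> x" by blast
    have "?moved y" if y: "y \<in> orbit G \<phi> x" for y
    proof (rule ccontr)
      assume fixed: "\<not> ?moved y"
      obtain h where h: "h \<in> carrier G" "\<phi> h x = y"
        using y by (auto simp: orbit_def)
      have "\<phi> (inv h) y = x"
        using orbit_sym_aux[OF h(1) x h(2)] .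
      moreover have "\<phi> (inv h) y = y"
        using fixed h(1) by auto
      ultimately show False
        using fixed True by simp
    qed
    then have count: "?count (orbit G \<phi> x) = card (orbit G \<phi> x)"
      by simp
    have "card (orbit G \<phi> x) dvd p ^ k"
      using orbit_stabilizer_theorem[OF x] assms(2) by (metis dvd_triv_left)
    then obtain i where i: "card (orbit G \<phi> x) = p ^ i"
      using divides_primepow_nat[OF assms(3)] by auto
    have "orbit G \<phi> x \<subseteq> E"
      using x element_image by (auto simp: orbit_def)
    then have "finite (orbit G \<phi> x)"
      using assms(1) by (rule finite_subset)
    moreover have "{x, \<phi> g x} \<subseteq> orbit G \<phi> x"
      using x g orbit_refl by (auto simp: orbit_def)
    ultimately have "card {x, \<phi> g x} \<le> card (orbit G \<phi> x)"
      by (intro card_mono)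
    then have "i \<noteq> 0"
      using g(2) i by (cases i) auto
    then show ?thesis
      using count i by simp
  qed
  have "card {x \<in> E. ?moved x} = (\<Sum>x \<in> E. if ?moved x then 1 else 0)"
    using assms(1) by (simp add: sum.If_cases Int_def)
  also have "\<dots> = (\<Sum>B \<in> orbits G E \<phi>. ?count B)"
    by (rule disjoint_sum[OF assms(1), symmetric])
  also have "p dvd \<dots>"
  proof (rule dvd_sum)
    fix B assume "B \<in> orbits G E \<phi>"
    then obtain x where "x \<in> E" "B = orbit G \<phi> x"
      by (auto simp: orbits_def)
    then show "p dvd ?count B"
      using orbit_dvd by simp
  qed
  finally show ?thesis .
qed

context group
begin

lemma card_set_mult_generate_le:
  fixes n :: nat
  assumes H: "subgroup H G" "finite H" and y: "y \<in> carrier G" "y [^] n \<in> H" and "0 < n"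
  shows "card (H <#> generate G {y}) \<le> n * card H"
proof -
  have Hc: "H \<subseteq> carrier G"
    using subgroup.subset[OF H(1)] .
  have "H <#> generate G {y} \<subseteq> (\<Union>r<n. H #> y [^] r)"
  proof
    fix a assume "a \<in> H <#> generate G {y}"
    then obtain h and i :: int where h: "h \<in> H" and a: "a = h \<otimes> y [^] i"
      by (auto simp: set_mult_def generate_pow[OF y(1)])
    define q r where "q = i div int n" and "r = i mod int n"
    have r: "0 \<le> r" "nat r < n"
      using \<open>0 < n\<close> by (simp_all add: r_def nat_less_iff)
    have "y [^] i = (y [^] n) [^] q \<otimes> y [^] nat r"
    proof -
      have "i = int n * q + r" by (simp add: q_def r_def)
      then show ?thesis
        using y(1) r(1) by (simp add: int_pow_mult int_pow_pow int_pow_int[symmetric])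
    qed
    then have "a = (h \<otimes> (y [^] n) [^] q) \<otimes> y [^] nat r"
      using a h Hc y(1) by (auto simp: m_assoc)
    moreover have "h \<otimes> (y [^] n) [^] q \<in> H"
      using h y(2) H(1) by (simp add: subgroup.m_closed subgroup_int_pow_closed)
    ultimately show "a \<in> (\<Union>r<n. H #> y [^] r)"
      using r(2) by (auto simp: r_coset_def)
  qed
  then have "card (H <#> generate G {y}) \<le> card (\<Union>r<n. H #> y [^] r)"
    using y(1) Hc H(2) by (intro card_mono) (auto intro: rcosets_finite rcosetsI)
  also have "\<dots> \<le> (\<Sum>r<n. card (H #> y [^] r))"
    by (rule card_UN_le) simp
  also have "\<dots> = (\<Sum>r<n. card H)"
    using y(1) by (intro sum.cong refl card_rcosets_equal[OF rcosetsI[OF Hc] Hc, symmetric]) simp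
  finally show ?thesis
    by simp
qed

lemma card_subgroup_le_index_mult_card_inter:
  assumes "finite (carrier G)" "subgroup H G" "subgroup M G"
  shows "card M \<le> card (rcosets H) * card (H \<inter> M)"
proof -
  have HM: "subgroup (H \<inter> M) G"
    using assms(2,3) by (rule subgroups_Inter_pair)
  have piece: "card (M \<inter> C) \<le> card (H \<inter> M)" if C: "C \<in> rcosets H" for C
  proof (cases "M \<inter> C = {}")
    case False
    then obtain b where b: "b \<in> M" "b \<in> C" by blast
    have bc: "b \<in> carrier G"
      using b(1) subgroup.mem_carrier[OF assms(3)] by blast
    have C_eq: "C = H #> b"
      using C b(2) repr_independence[OF _ _ assms(2)] by (auto simp: RCOSETS_def)
    have "M \<inter> C \<subseteq> (H \<inter> M) #> b"
    proof
      fix c assume c: "c \<in> M \<inter> C"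
      have "c \<otimes> inv b \<in> H"
        using c C_eq subgroup.rcos_module_imp[OF assms(2) is_group bc] by blast
      moreover have "c \<otimes> inv b \<in> M"
        using c b(1) assms(3) by (simp add: subgroup.m_closed subgroup.m_inv_closed)
      ultimately show "c \<in> (H \<inter> M) #> b"
        using c bc subgroup.mem_carrier[OF assms(3)] subgroup.rcos_module_rev[OF HM is_group bc]
        by blast
    qed
    moreover have "finite ((H \<inter> M) #> b)"
      using assms(1) bc subgroup.subset[OF HM] by (meson r_coset_subset_G finite_subset)
    ultimately have "card (M \<inter> C) \<le> card ((H \<inter> M) #> b)"
      by (rule card_mono[rotated])
    also have "\<dots> = card (H \<inter> M)"
      using card_rcosets_equal[OF rcosetsI[OF _ bc]] subgroup.subset[OF HM] by metis
    finally show ?thesis .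
  qed simp
  have "finite (rcosets H)"
    using assms(1,2) rcosets_subset_PowG finite_subset by (metis finite_Pow_iff)
  have "M = (\<Union>C \<in> rcosets H. M \<inter> C)"
    using rcosets_part_G[OF assms(2)] subgroup.subset[OF assms(3)] by blast
  then have "card M \<le> (\<Sum>C \<in> rcosets H. card (M \<inter> C))"
    using card_UN_le[OF \<open>finite (rcosets H)\<close>] by metis
  also have "\<dots> \<le> (\<Sum>C \<in> rcosets H. card (H \<inter> M))"
    using piece by (rule sum_mono)
  finally show ?thesis
    by simp
qed

end

lemma finite_comm_tuples: "finite (carrier G) \<Longrightarrow> finite (comm_tuples G n)"
  unfolding comm_tuples_def
  by (rule finite_subset[of _ "{..<n} \<rightarrow>\<^sub>E carrier G"]) (auto intro: finite_PiE)

lemma card_comm_tuples_abelian: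
  assumes "abelian_set S G"
  shows "card (comm_tuples (G\<lparr>carrier := S\<rparr>) n) = card S ^ n"
proof -
  have "comm_tuples (G\<lparr>carrier := S\<rparr>) n = {..<n} \<rightarrow>\<^sub>E S"
    using assms by (auto simp: comm_tuples_def abelian_set_def PiE_iff extensional_def)
  then show ?thesis
    by (simp add: card_PiE)
qed

lemma beta_0: "beta G 0 = 1"
  by (simp add: beta_def comm_tuples_def)

context group
begin

lemma card_comm_tuples_Suc:
  assumes "finite (carrier G)"
  shows "card (comm_tuples G (Suc n))
           = (\<Sum>g \<in> carrier G. card (comm_tuples (G\<lparr>carrier := centralizer G {g}\<rparr>) n))"
proof -
  let ?C = "\<lambda>g. comm_tuples (G\<lparr>carrier := centralizer G {g}\<rparr>) n"
  let ?T = "SIGMA g : carrier G. ?C g"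
  let ?extend = "\<lambda>(g, x). x(n := g)"
  have C_subset: "?C g \<subseteq> {..<n} \<rightarrow>\<^sub>E carrier G" for g
    using PiE_mono[of "{..<n}" "\<lambda>_. centralizer G {g}" "\<lambda>_. carrier G"]
    by (auto simp: comm_tuples_def centralizer_def)
  have extend: "x(n := g) \<in> comm_tuples G (Suc n)" if g: "g \<in> carrier G" and x: "x \<in> ?C g" for g x
  proof -
    have "x(n := g) \<in> {..<Suc n} \<rightarrow>\<^sub>E carrier G"
      using PiE_fun_upd[OF g subsetD[OF C_subset x]] by (simp add: lessThan_Suc)
    moreover have "(x(n := g)) i \<otimes> (x(n := g)) j = (x(n := g)) j \<otimes> (x(n := g)) i"
      if "i < Suc n" "j < Suc n" for i j
    proof -
      have "\<forall>i<n. x i \<otimes> g = g \<otimes> x i" "\<forall>i<n. \<forall>j<n. x i \<otimes> x j = x j \<otimes> x i"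
        using x by (auto simp: comm_tuples_def centralizer_def)
      then show ?thesis
        using that by (cases "i = n"; cases "j = n") simp_all
    qed
    ultimately show ?thesis
      by (simp add: comm_tuples_def)
  qed
  have restrict: "x \<in> ?extend ` ?T" if x: "x \<in> comm_tuples G (Suc n)" for x
  proof (rule rev_image_eqI)
    have xG: "x \<in> {..<Suc n} \<rightarrow>\<^sub>E carrier G"
      and comm: "\<forall>i<Suc n. \<forall>j<Suc n. x i \<otimes> x j = x j \<otimes> x i"
      using x by (simp_all add: comm_tuples_def)
    have "(restrict x {..<n})(n := x n) = x"
      using xG by (simp add: lessThan_Suc[symmetric])
    then show "x = ?extend (x n, restrict x {..<n})"
      by simp
    have "\<forall>i<n. x i \<in> carrier G"
      using PiE_mem[OF xG] by simp
    then have "restrict x {..<n} \<in> ?C (x n)"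
      using comm by (simp add: comm_tuples_def centralizer_def)
    then show "(x n, restrict x {..<n}) \<in> ?T"
      using xG by auto
  qed
  have "comm_tuples G (Suc n) = ?extend ` ?T"
    using extend restrict by auto
  moreover have "inj_on ?extend ?T"
    by (rule inj_on_subset[OF inj_combinator[of n "{..<n}" "\<lambda>_. carrier G"]])
       (use C_subset in auto)
  ultimately have "card (comm_tuples G (Suc n)) = card ?T"
    by (simp add: card_image)
  also have "\<dots> = (\<Sum>g \<in> carrier G. card (?C g))"
  proof (rule card_SigmaI[OF assms, rule_format])
    fix g
    have "finite (centralizer G {g})"
      using assms by (rule rev_finite_subset) (auto simp: centralizer_def)
    then show "finite (?C g)"
      using finite_comm_tuples[of "G\<lparr>carrier := centralizer G {g}\<rparr>"] by simp
  qed
  finally show ?thesis .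
qed

lemma comm_tuples_carrier_update:
  assumes "S \<subseteq> carrier G"
  shows "comm_tuples (G\<lparr>carrier := S\<rparr>) n = {x \<in> comm_tuples G n. \<forall>i<n. x i \<in> S}"
  using assms by (auto simp: comm_tuples_def PiE_iff)

lemma conj_tuple_mult:
  assumes "g \<in> carrier G" "h \<in> carrier G" "x \<in> {..<n} \<rightarrow> carrier G"
  shows "conj_tuple G n (g \<otimes> h) x = conj_tuple G n g (conj_tuple G n h x)"
  unfolding conj_tuple_def using assms by (intro restrict_ext) (simp add: Pi_iff m_assoc inv_mult_group)

lemma conj_tuple_eq_self_iff:
  assumes "x \<in> {..<n} \<rightarrow>\<^sub>E carrier G"
  shows "conj_tuple G n g x = x \<longleftrightarrow> (\<forall>i<n. g \<otimes> x i \<otimes> inv g = x i)"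
proof
  assume eq: "conj_tuple G n g x = x"
  show "\<forall>i<n. g \<otimes> x i \<otimes> inv g = x i"
  proof (intro allI impI)
    fix i assume "i < n"
    with eq show "g \<otimes> x i \<otimes> inv g = x i"
      unfolding conj_tuple_def by (metis lessThan_iff restrict_apply')
  qed
next
  assume "\<forall>i<n. g \<otimes> x i \<otimes> inv g = x i"
  then have "conj_tuple G n g x = restrict x {..<n}"
    unfolding conj_tuple_def by (intro restrict_ext) simp
  then show "conj_tuple G n g x = x"
    using assms by simp
qed

lemma conj_tuple_closed:
  assumes "g \<in> carrier G" "x \<in> comm_tuples G n"
  shows "conj_tuple G n g x \<in> comm_tuples G n"
proof -
  have x: "\<forall>i<n. x i \<in> carrier G" "\<forall>i<n. \<forall>j<n. x i \<otimes> x j = x j \<otimes> x i"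
    using assms(2) PiE_mem by (auto simp: comm_tuples_def)
  have "g \<otimes> x i \<otimes> inv g \<otimes> (g \<otimes> x j \<otimes> inv g) = g \<otimes> x j \<otimes> inv g \<otimes> (g \<otimes> x i \<otimes> inv g)"
    if "i < n" "j < n" for i j
  proof -
    have "g \<otimes> x i \<otimes> inv g \<otimes> (g \<otimes> x j \<otimes> inv g) = g \<otimes> (x i \<otimes> x j) \<otimes> inv g"
      using assms(1) x(1) that by (simp add: m_assoc)
    also have "\<dots> = g \<otimes> (x j \<otimes> x i) \<otimes> inv g"
      using x(2) that by simp
    also have "\<dots> = g \<otimes> x j \<otimes> inv g \<otimes> (g \<otimes> x i \<otimes> inv g)"
      using assms(1) x(1) that by (simp add: m_assoc)
    finally show ?thesis .
  qed
  then show ?thesis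
    using assms(1) x(1) by (simp add: comm_tuples_def conj_tuple_def)
qed

lemma beta_mult_order:
  assumes "finite (carrier G)"
  shows "beta G n * order G = card (comm_tuples G (Suc n))"
proof -
  let ?E = "comm_tuples G n"
  let ?\<phi> = "\<lambda>g. restrict (conj_tuple G n g) ?E"
  have E: "x \<in> {..<n} \<rightarrow>\<^sub>E carrier G" if "x \<in> ?E" for x
    using that by (simp add: comm_tuples_def)
  have action: "group_action G ?E ?\<phi>"
  proof (rule group_actionI[OF is_group])
    show "?\<phi> (g \<otimes> h) x = ?\<phi> g (?\<phi> h x)" if "g \<in> carrier G" "h \<in> carrier G" "x \<in> ?E" for g h x
      using that E[of x] by (simp add: conj_tuple_closed conj_tuple_mult PiE_iff)
    show "?\<phi> \<one> x = x" if "x \<in> ?E" for x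
      using that E[OF that] PiE_mem[OF E[OF that]] by (simp add: conj_tuple_eq_self_iff)
  qed (simp_all add: conj_tuple_closed)
  have "orbit G ?\<phi> x = conj_orbit G n x" if "x \<in> ?E" for x
    using that by (auto simp: orbit_def conj_orbit_def)
  then have orbits: "orbits G ?E ?\<phi> = conj_orbit G n ` ?E"
    by (auto simp: orbits_def)
  have fixed: "invariants ?E ?\<phi> g = comm_tuples (G\<lparr>carrier := centralizer G {g}\<rparr>) n"
    if g: "g \<in> carrier G" for g
  proof -
    have "?\<phi> g x = x \<longleftrightarrow> (\<forall>i<n. x i \<in> centralizer G {g})" if "x \<in> ?E" for x
      using that E[OF that] PiE_mem[OF E[OF that]] g
      by (simp add: conj_tuple_eq_self_iff centralizer_def conj_eq_self_iff eq_commute[of "g \<otimes> _"])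
    then show ?thesis
      by (auto simp: invariants_def comm_tuples_carrier_update centralizer_def)
  qed
  have "beta G n * order G = card (orbits G ?E ?\<phi>) * order G"
    by (simp add: beta_def orbits)
  also have "\<dots> = (\<Sum>g \<in> carrier G. card (invariants ?E ?\<phi> g))"
    by (rule group_action.burnside[OF action assms finite_comm_tuples[OF assms]])
  also have "\<dots> = card (comm_tuples G (Suc n))"
    by (simp add: fixed card_comm_tuples_Suc[OF assms])
  finally show ?thesis .
qed

lemma card_comm_tuples_Suc_abelian_centralizers:
  assumes "finite (carrier G)"
    and abelian: "\<And>g. g \<in> carrier G - group_center G \<Longrightarrow> abelian_set (centralizer G {g}) G"
  shows "card (comm_tuples G (Suc n))
           = card (group_center G) * card (comm_tuples G n)
             + (\<Sum>g \<in> carrier G - group_center G. card (centralizer G {g}) ^ n)"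
proof -
  let ?Z = "group_center G"
  let ?c = "\<lambda>g. card (comm_tuples (G\<lparr>carrier := centralizer G {g}\<rparr>) n)"
  have Z: "?Z \<subseteq> carrier G"
    by (auto simp: group_center_def)
  have "card (comm_tuples G (Suc n)) = (\<Sum>g \<in> ?Z. ?c g) + (\<Sum>g \<in> carrier G - ?Z. ?c g)"
    using card_comm_tuples_Suc[OF assms(1)] sum.subset_diff[OF Z assms(1)] by (simp add: add.commute)
  also have "(\<Sum>g \<in> ?Z. ?c g) = card ?Z * card (comm_tuples G n)"
  proof -
    have "centralizer G {g} = carrier G" if "g \<in> ?Z" for g
      using that Z centralizer_eq_carrier_iff by blast
    then show ?thesis
      by simp
  qed
  also have "(\<Sum>g \<in> carrier G - ?Z. ?c g) = (\<Sum>g \<in> carrier G - ?Z. card (centralizer G {g}) ^ n)"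
    using abelian by (simp add: card_comm_tuples_abelian)
  finally show ?thesis .
qed

end
locale p_group = group G for G (structure) +
  fixes p m :: nat
  assumes prime_p: "Factorial_Ring.prime p"
    and finite_G: "finite (carrier G)"
    and order_G: "order G = p ^ m"
begin

lemma one_less_p: "1 < p"
  using prime_p prime_gt_1_nat by blast

lemma p_power_less_iff [simp]: "p ^ a < p ^ b \<longleftrightarrow> a < b"
  using one_less_p by simp

lemma p_power_le_iff [simp]: "p ^ a \<le> p ^ b \<longleftrightarrow> a \<le> b"
  using one_less_p by simp

lemma p_power_inject [simp]: "p ^ a = p ^ b \<longleftrightarrow> a = b"
  using one_less_p by simp

lemma p_mult_power_le_iff [simp]: "p * p ^ a \<le> p ^ b \<longleftrightarrow> a < b"
  using p_power_le_iff[of "Suc a" b] by (simp add: Suc_le_eq)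

lemma card_carrier: "card (carrier G) = p ^ m"
  using order_G by (simp add: order_def)

lemma finite_subgroup: "subgroup H G \<Longrightarrow> finite H"
  using finite_G subgroup.subset finite_subset by blast

lemma card_subgroup:
  assumes "subgroup H G"
  obtains k where "k \<le> m" "card H = p ^ k" "card (rcosets H) = p ^ (m - k)"
proof -
  have "card (rcosets H) * card H = p ^ m"
    using lagrange[OF assms] order_G by simp
  then obtain k where k: "k \<le> m" "card H = p ^ k"
    using divides_primepow_nat[OF prime_p] by (metis dvd_triv_right)
  then have "card (rcosets H) * p ^ k = p ^ (m - k) * p ^ k"
    using \<open>card (rcosets H) * card H = p ^ m\<close> by (simp flip: power_add)
  then show thesis
    using that k one_less_p by simp
qed

lemma card_subgroup_psubset:
  assumes "subgroup A G" "subgroup B G" "A \<subset> B"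
  shows "p * card A \<le> card B"
proof -
  obtain a b where a: "card A = p ^ a" and b: "card B = p ^ b"
    using card_subgroup assms(1,2) by metis
  have "card A < card B"
    using assms by (intro psubset_card_mono finite_subgroup)
  then have "a < b"
    using a b by simp
  then have "p ^ Suc a \<le> p ^ b"
    by (simp only: p_power_le_iff Suc_le_eq)
  then show ?thesis
    using a b by simp
qed

lemma card_proper_subgroup:
  assumes "subgroup H G" "H \<noteq> carrier G"
  obtains k where "k < m" "card H = p ^ k" "card (rcosets H) = p ^ (m - k)"
proof -
  obtain k where k: "k \<le> m" "card H = p ^ k" "card (rcosets H) = p ^ (m - k)"
    using card_subgroup[OF assms(1)] .
  have "card H < card (carrier G)"
    using assms subgroup.subset by (metis psubsetI psubset_card_mono finite_G)
  then have "k < m"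
    using k order_G by (simp add: order_def)
  then show thesis
    using that k by blast
qed

lemma subgroup_psubset_normalizer:
  assumes H: "subgroup H G" "H \<noteq> carrier G"
  shows "H \<subset> normalizer G H"
proof -
  have Hc: "H \<subseteq> carrier G"
    using subgroup.subset[OF H(1)] .
  obtain k where k: "k < m" "card H = p ^ k" "card (rcosets H) = p ^ (m - k)"
    using card_proper_subgroup[OF H] .
  let ?\<phi> = "\<lambda>h. \<lambda>C \<in> rcosets H. C #> inv h"
  interpret H_action: group_action "G\<lparr>carrier := H\<rparr>" "rcosets H" ?\<phi>
    using group_action.induced_action[OF rcosets_action[OF H(1)] H(1)] .
  define F where "F = {C \<in> rcosets H. \<forall>h \<in> H. ?\<phi> h C = C}"
  have fin: "finite (rcosets H)"
    using rcosets_subset_PowG[OF H(1)] finite_G by (meson finite_Pow_iff finite_subset)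
  have "p dvd card {C \<in> rcosets H. \<exists>h \<in> H. ?\<phi> h C \<noteq> C}"
    using H_action.prime_dvd_card_non_fixed_points[OF fin _ prime_p] k(2)
    by (simp add: order_def)
  moreover have "p dvd card (rcosets H)"
    using k by simp
  moreover have "F = rcosets H - {C \<in> rcosets H. \<exists>h \<in> H. ?\<phi> h C \<noteq> C}"
    by (auto simp: F_def)
  ultimately have "p dvd card F"
    using fin by (simp add: card_Diff_subset dvd_diff_nat)
  moreover have "H \<in> F"
    using H(1) rcosetsI[OF Hc one_closed] Hc
    by (simp add: F_def coset_join2 subgroup.m_inv_closed subgroup.mem_carrier)
  ultimately have "p \<le> card F"
    using fin by (intro dvd_imp_le) (auto simp: F_def card_gt_0_iff)
  then have "card (F - {H}) \<noteq> 0"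
    using one_less_p \<open>H \<in> F\<close> by simp
  then obtain C where C: "C \<in> F" "C \<noteq> H"
    by (metis card.empty ex_in_conv DiffE singletonI)
  then obtain g where g: "g \<in> carrier G" "C = H #> g"
    by (auto simp: F_def RCOSETS_def)
  have "g \<notin> H"
    using C g coset_join2[OF g(1) H(1)] by blast
  have "g \<otimes> h \<otimes> inv g \<in> H" if h: "h \<in> H" for h
  proof -
    have hc: "h \<in> carrier G"
      using h Hc by blast
    have "C #> inv (inv h) = C"
      using C(1) h H(1) unfolding F_def by (auto dest: subgroup.m_inv_closed)
    then have "H #> (g \<otimes> h) = H #> g"
      using g hc Hc by (simp add: coset_mult_assoc)
    then have "g \<otimes> h \<in> H #> g"
      using rcos_self[OF _ H(1)] g(1) hc by (metis m_closed)
    then show ?thesis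
      using subgroup.rcos_module_imp[OF H(1) is_group g(1)] by blast
  qed
  then have "g \<in> normalizer G H"
    using normalizerI_finite[OF H(1) finite_subgroup[OF H(1)] g(1)] by blast
  moreover have "H \<subseteq> normalizer G H"
    using H(1) finite_subgroup[OF H(1)] Hc
    by (auto intro!: normalizerI_finite simp: subgroup.m_closed subgroup.m_inv_closed)
  ultimately show ?thesis
    using \<open>g \<notin> H\<close> by blast
qed

lemma maximal_subgroup_normal:
  assumes "maximal_subgroup H G"
  shows "H \<lhd> G"
proof -
  have H: "subgroup H G" "H \<noteq> carrier G"
    using assms by (auto simp: maximal_subgroup_def)
  have "subgroup (normalizer G H) G"
    using subgroup.subset[OF H(1)] by (rule normalizer_imp_subgroup)
  then have "normalizer G H = carrier G"
    using assms subgroup_psubset_normalizer[OF H] unfolding maximal_subgroup_def by blast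
  then show ?thesis
    using subgroup_in_normalizer[OF H(1)] by simp
qed

lemma exists_pow_p_mem:
  assumes "subgroup H G" "y0 \<in> carrier G" "y0 \<notin> H"
  obtains y where "y \<in> carrier G" "y \<notin> H" "y [^] p \<in> H"
proof -
  have "y0 [^] (p ^ m) \<in> H"
    using pow_order_eq_1[OF assms(2)] order_G subgroup.one_closed[OF assms(1)] by simp
  moreover have "y0 [^] (p ^ 0) \<notin> H"
    using assms(2,3) by simp
  ultimately obtain k where "y0 [^] (p ^ k) \<notin> H" "y0 [^] (p ^ Suc k) \<in> H"
    using exists_least_lemma[of "\<lambda>k. y0 [^] (p ^ k) \<in> H"] by blast
  moreover have "(y0 [^] (p ^ k)) [^] p = y0 [^] (p ^ Suc k)"
    using assms(2) by (simp add: nat_pow_pow mult.commute)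
  ultimately show thesis
    using that[of "y0 [^] (p ^ k)"] assms(2) by simp
qed

lemma card_maximal_subgroup:
  assumes "maximal_subgroup H G"
  shows "card H = p ^ (m - 1)"
proof -
  have H: "subgroup H G" "H \<noteq> carrier G"
    using assms by (auto simp: maximal_subgroup_def)
  interpret H_normal: normal H G
    using maximal_subgroup_normal[OF assms] .
  obtain k where k: "k < m" "card H = p ^ k"
    using card_proper_subgroup[OF H] by blast
  obtain y where y: "y \<in> carrier G" "y \<notin> H" "y [^] p \<in> H"
    using H subgroup.subset[OF H(1)] exists_pow_p_mem[OF H(1)] by blast
  define K where "K = H <#> generate G {y}"
  have K: "subgroup K G"
    unfolding K_def using generate_is_subgroup[of "{y}"] y(1)
    by (intro second_isomorphism_grp.normal_set_mult_subgroup)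
       (auto simp: second_isomorphism_grp_def second_isomorphism_grp_axioms_def H_normal.normal_axioms)
  have "h \<otimes> \<one> \<in> K" if "h \<in> H" for h
    using that generate.one[of G "{y}"] unfolding K_def set_mult_def by blast
  then have "H \<subseteq> K"
    using subgroup.subset[OF H(1)] by auto
  have "\<one> \<otimes> y \<in> K"
    using subgroup.one_closed[OF H(1)] generate.incl[of y "{y}" G] unfolding K_def set_mult_def by blast
  then have "y \<in> K"
    using y(1) by simp
  with \<open>H \<subseteq> K\<close> have "K = carrier G"
    using assms K y(2) unfolding maximal_subgroup_def by blast
  then have "p ^ m \<le> p ^ Suc k"
    using card_set_mult_generate_le[OF H(1) finite_subgroup[OF H(1)] y(1,3)] one_less_p k(2) order_G
    by (simp add: K_def order_def)
  then have "m \<le> Suc k"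
    using p_power_le_iff[of m "Suc k"] by simp
  then show ?thesis
    using k by simp
qed

lemma maximal_subgroup_iff_card:
  assumes "0 < m"
  shows "maximal_subgroup H G \<longleftrightarrow> subgroup H G \<and> card H = p ^ (m - 1)"
proof
  assume max: "maximal_subgroup H G"
  then have "subgroup H G"
    by (simp add: maximal_subgroup_def)
  with card_maximal_subgroup[OF max] show "subgroup H G \<and> card H = p ^ (m - 1)"
    by blast
next
  assume "subgroup H G \<and> card H = p ^ (m - 1)"
  then have H: "subgroup H G" and card_H: "card H = p ^ (m - 1)"
    by blast+
  have pH: "p * card H = p ^ m"
    using assms card_H by (cases m) simp_all
  have "K = H" if K: "subgroup K G" "H \<subseteq> K" "K \<noteq> carrier G" for K
  proof (rule ccontr)
    assume "K \<noteq> H"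
    with K(2) have "p * card H \<le> card K"
      using card_subgroup_psubset[OF H K(1)] by blast
    then have "p * p ^ m \<le> p * card K"
      using pH by (metis mult_le_mono2)
    also have "p * card K \<le> card (carrier G)"
      using K(3) subgroup.subset[OF K(1)] card_subgroup_psubset[OF K(1) subgroup_self] by blast
    also have "\<dots> = p ^ m"
      using order_G by (simp add: order_def)
    finally show False
      using p_power_le_iff[of "Suc m" m] by simp
  qed
  moreover have "H \<noteq> carrier G"
  proof
    assume "H = carrier G"
    then have "p ^ (m - 1) = p ^ m"
      using card_H order_G by (simp add: order_def)
    then show False
      using assms by simp
  qed
  ultimately show "maximal_subgroup H G"
    using H unfolding maximal_subgroup_def by blast
qed

end
locale center_index_p3 = p_group +
  assumes index_center: "card (rcosets (group_center G)) = p ^ 3"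
begin

lemma three_le_m: "3 \<le> m" and card_group_center: "card (group_center G) = p ^ (m - 3)"
proof -
  obtain k where "k \<le> m" "card (group_center G) = p ^ k" "card (rcosets (group_center G)) = p ^ (m - k)"
    using card_subgroup[OF subgroup_group_center] .
  moreover from this have "m - k = 3"
    using index_center by simp
  ultimately show "3 \<le> m" "card (group_center G) = p ^ (m - 3)"
    by simp_all
qed

lemma p_mult_power_m_minus:
  "p * p ^ (m - 3) = p ^ (m - 2)" "p * p ^ (m - 2) = p ^ (m - 1)" "p * p ^ (m - 1) = p ^ m"
proof -
  obtain k where "m = k + 3"
    using three_le_m le_Suc_ex by (metis add.commute)
  then show "p * p ^ (m - 3) = p ^ (m - 2)" "p * p ^ (m - 2) = p ^ (m - 1)" "p * p ^ (m - 1) = p ^ m"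
    by (simp_all add: numeral_eq_Suc)
qed

lemma subgroup_centralizer_elem: "g \<in> carrier G \<Longrightarrow> subgroup (centralizer G {g}) G"
  by (rule subgroup_centralizer) simp

lemma centralizer_psubsets:
  assumes g: "g \<in> carrier G - group_center G"
  shows "group_center G \<subset> centralizer G {g}" "centralizer G {g} \<subset> carrier G"
proof -
  have "group_center G \<subseteq> centralizer G {g}"
    using g by (auto simp: group_center_def centralizer_def)
  moreover have "g \<in> centralizer G {g}"
    using g by (simp add: centralizer_def)
  ultimately show "group_center G \<subset> centralizer G {g}"
    using g by blast
  show "centralizer G {g} \<subset> carrier G"
    using g centralizer_eq_carrier_iff by (auto simp: centralizer_def)
qed

lemma card_centralizer:
  assumes g: "g \<in> carrier G - group_center G"
  shows "card (centralizer G {g}) = p ^ (m - 2) \<or> card (centralizer G {g}) = p ^ (m - 1)"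
proof -
  have C: "subgroup (centralizer G {g}) G"
    using g subgroup_centralizer_elem by blast
  obtain k where k: "card (centralizer G {g}) = p ^ k"
    using card_subgroup[OF C] by metis
  have "p * card (group_center G) \<le> card (centralizer G {g})"
    using card_subgroup_psubset[OF subgroup_group_center C centralizer_psubsets(1)[OF g]] .
  then have "m - 2 \<le> k"
    using k card_group_center p_mult_power_m_minus(1) by simp
  moreover have "p * card (centralizer G {g}) \<le> card (carrier G)"
    using card_subgroup_psubset[OF C subgroup_self centralizer_psubsets(2)[OF g]] .
  then have "k < m"
    using k card_carrier by simp
  ultimately have "k = m - 2 \<or> k = m - 1"
    using three_le_m by linarith
  then show ?thesis
    using k by auto
qed

lemma abelian_centralizer:
  assumes g: "g \<in> carrier G - group_center G"
  shows "abelian_set (centralizer G {g}) G"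
  unfolding abelian_set_def
proof (intro ballI)
  let ?Z = "group_center G" and ?C = "centralizer G {g}"
  fix x y assume x: "x \<in> ?C" and y: "y \<in> ?C"
  have C: "subgroup ?C G"
    using g subgroup_centralizer_elem by blast
  have C_carrier: "?C \<subseteq> carrier G"
    by (auto simp: centralizer_def)
  define W where "W = ?C \<inter> centralizer G ?C"
  define Cx where "Cx = ?C \<inter> centralizer G {x}"
  have W: "subgroup W G"
    unfolding W_def using C subgroup_centralizer[OF C_carrier] by (rule subgroups_Inter_pair)
  have Cx: "subgroup Cx G"
    unfolding Cx_def using C subgroup_centralizer_elem x C_carrier by (intro subgroups_Inter_pair) auto
  have "?Z \<subseteq> W" "g \<in> W"
    using g by (auto simp: W_def centralizer_def group_center_def)
  then have "?Z \<subset> W"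
    using g by blast
  then have "p * card ?Z \<le> card W"
    using card_subgroup_psubset[OF subgroup_group_center W] by blast
  show "x \<otimes> y = y \<otimes> x"
  proof (rule ccontr)
    assume xy: "x \<otimes> y \<noteq> y \<otimes> x"
    have "W \<subseteq> Cx" "x \<in> Cx" "x \<notin> W"
      using x y xy C_carrier by (auto simp: W_def Cx_def centralizer_def)
    then have "p * card W \<le> card Cx"
      using card_subgroup_psubset[OF W Cx] by blast
    have "Cx \<subseteq> ?C"
      by (auto simp: Cx_def)
    then have "card Cx \<le> card ?C"
      using finite_subgroup[OF C] by (rule card_mono[rotated])
    have "p * card ?C \<le> p ^ m"
      using card_subgroup_psubset[OF C subgroup_self centralizer_psubsets(2)[OF g]] card_carrier by simp
    have "p * (p * card ?Z) \<le> card Cx"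
      using \<open>p * card ?Z \<le> card W\<close> \<open>p * card W \<le> card Cx\<close> by (meson le_trans mult_le_mono2)
    then have "p * (p * (p * card ?Z)) \<le> p * card Cx"
      by simp
    moreover have "p * (p * (p * card ?Z)) = p ^ m"
      using card_group_center p_mult_power_m_minus by simp
    ultimately have "p * card ?C \<le> p * card Cx"
      using \<open>p * card ?C \<le> p ^ m\<close> by linarith
    then have "card ?C \<le> card Cx"
      using one_less_p by simp
    then have "Cx = ?C"
      using \<open>Cx \<subseteq> ?C\<close> \<open>card Cx \<le> card ?C\<close> finite_subgroup[OF C] card_subset_eq le_antisym by metis
    with y have "y \<in> Cx"
      by simp
    then have "y \<otimes> x = x \<otimes> y"
      by (simp add: Cx_def centralizer_def)
    with xy show False
      by simp
  qed
qed

lemma card_centralizer_no_abelian_maximal: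
  assumes no_abelian: "\<not> (\<exists>H. maximal_subgroup H G \<and> abelian_set H G)"
    and g: "g \<in> carrier G - group_center G"
  shows "card (centralizer G {g}) = p ^ (m - 2)"
proof (rule ccontr)
  assume "card (centralizer G {g}) \<noteq> p ^ (m - 2)"
  then have "card (centralizer G {g}) = p ^ (m - 1)"
    using card_centralizer[OF g] by blast
  then have "maximal_subgroup (centralizer G {g}) G"
    using maximal_subgroup_iff_card three_le_m subgroup_centralizer_elem g by simp
  then show False
    using no_abelian abelian_centralizer[OF g] by blast
qed

lemma beta_Suc_mult_order:
  "beta G (Suc n) * p ^ m = p ^ (m - 3) * (beta G n * p ^ m)
     + (\<Sum>g \<in> carrier G - group_center G. card (centralizer G {g}) ^ Suc n)"
proof -
  have "beta G (Suc n) * p ^ m = card (comm_tuples G (Suc (Suc n)))"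
    using beta_mult_order[OF finite_G] order_G by simp
  also have "\<dots> = card (group_center G) * card (comm_tuples G (Suc n))
                    + (\<Sum>g \<in> carrier G - group_center G. card (centralizer G {g}) ^ Suc n)"
    by (rule card_comm_tuples_Suc_abelian_centralizers[OF finite_G abelian_centralizer])
  also have "card (comm_tuples G (Suc n)) = beta G n * p ^ m"
    using beta_mult_order[OF finite_G] order_G by simp
  finally show ?thesis
    by (simp only: card_group_center)
qed

lemma p_powi_m_minus:
  assumes "k \<le> 5"
  shows "(of_nat p :: rat) powi (int m - int k) = of_nat p powi (int m - 5) * of_nat p ^ (5 - k)"
proof -
  have "(of_nat p :: rat) powi (int m - int k) = of_nat p powi ((int m - 5) + int (5 - k))"
    using assms by (simp add: of_nat_diff)
  also have "\<dots> = of_nat p powi (int m - 5) * of_nat p ^ (5 - k)"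
    using one_less_p by (subst power_int_add) simp_all
  finally show ?thesis .
qed

lemma p_power_m_minus:
  assumes "k \<le> 3"
  shows "(of_nat p :: rat) ^ (m - k) = of_nat p powi (int m - 5) * of_nat p ^ (5 - k)"
proof -
  have "(of_nat p :: rat) ^ (m - k) = of_nat p powi (int m - int k)"
    using assms three_le_m by (simp add: of_nat_diff flip: power_int_of_nat)
  then show ?thesis
    using assms p_powi_m_minus by simp
qed

lemma card_carrier_minus_group_center: "card (carrier G - group_center G) = p ^ m - p ^ (m - 3)"
  using card_Diff_subset[OF finite_subgroup[OF subgroup_group_center] subgroup.subset[OF subgroup_group_center]]
    card_carrier card_group_center by simp

lemma beta_Suc_no_abelian_maximal:
  assumes "\<not> (\<exists>H. maximal_subgroup H G \<and> abelian_set H G)"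
  shows "(of_nat (beta G (Suc n)) :: rat)
           = of_nat p powi (int m - 3) * of_nat (beta G n)
             + (of_nat p powi (int m - 2) - of_nat p powi (int m - 5)) * (of_nat p powi (int m - 2)) ^ n"
proof -
  let ?x = "of_nat p :: rat"
  let ?q = "?x powi (int m - 5)" and ?b = "\<lambda>n. (of_nat (beta G n) :: rat)"
  have "(\<Sum>g \<in> carrier G - group_center G. card (centralizer G {g}) ^ Suc n)
          = (p ^ m - p ^ (m - 3)) * (p ^ (m - 2)) ^ Suc n"
    using card_centralizer_no_abelian_maximal[OF assms] card_carrier_minus_group_center by simp
  then have "beta G (Suc n) * p ^ m
               = p ^ (m - 3) * (beta G n * p ^ m) + (p ^ m - p ^ (m - 3)) * (p ^ (m - 2)) ^ Suc n"
    using beta_Suc_mult_order by simp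
  then have "(of_nat (beta G (Suc n) * p ^ m) :: rat)
               = of_nat (p ^ (m - 3) * (beta G n * p ^ m) + (p ^ m - p ^ (m - 3)) * (p ^ (m - 2)) ^ Suc n)"
    by (rule arg_cong)
  then have "?b (Suc n) * (?q * ?x ^ 5)
               = ?q * ?x ^ 2 * (?b n * (?q * ?x ^ 5)) + (?q * ?x ^ 5 - ?q * ?x ^ 2) * (?q * ?x ^ 3) ^ Suc n"
    using p_power_m_minus[of 0] p_power_m_minus[of 2] p_power_m_minus[of 3]
    by (simp add: of_nat_diff)
  moreover have "(?q * ?x ^ 2 * ?b n + (?q * ?x ^ 3 - ?q) * (?q * ?x ^ 3) ^ n) * (?q * ?x ^ 5)
      = ?q * ?x ^ 2 * (?b n * (?q * ?x ^ 5)) + (?q * ?x ^ 5 - ?q * ?x ^ 2) * (?q * ?x ^ 3) ^ Suc n"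
    by (simp add: algebra_simps)
  moreover have "?q * ?x ^ 5 \<noteq> 0"
    using one_less_p by simp
  ultimately have "?b (Suc n) = ?q * ?x ^ 2 * ?b n + (?q * ?x ^ 3 - ?q) * (?q * ?x ^ 3) ^ n"
    by (metis mult_right_cancel)
  then show ?thesis
    using p_powi_m_minus[of 2] p_powi_m_minus[of 3] by simp
qed

context
  fixes H
  assumes maximal: "maximal_subgroup H G" and abelian: "abelian_set H G"
begin

lemma subgroup_abelian_maximal: "subgroup H G"
  using maximal by (simp add: maximal_subgroup_def)

lemma group_center_subset_abelian_maximal: "group_center G \<subseteq> H"
proof -
  let ?T = "centralizer G H"
  have H_carrier: "H \<subseteq> carrier G"
    using subgroup.subset[OF subgroup_abelian_maximal] .
  have T: "subgroup ?T G"
    using subgroup_centralizer[OF H_carrier] .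
  have "H \<subseteq> ?T"
    using abelian H_carrier by (auto simp: abelian_set_def centralizer_def)
  have "?T \<noteq> carrier G"
  proof
    assume T_carrier: "?T = carrier G"
    have "H \<subseteq> group_center G"
    proof
      fix h assume h: "h \<in> H"
      have "g \<otimes> h = h \<otimes> g" if "g \<in> carrier G" for g
        using that h T_carrier unfolding centralizer_def by blast
      then show "h \<in> group_center G"
        using h H_carrier by (auto simp: group_center_def)
    qed
    then have "card H \<le> card (group_center G)"
      using card_mono[OF finite_subgroup[OF subgroup_group_center]] by blast
    then have "p ^ (m - 1) \<le> p ^ (m - 3)"
      by (simp only: card_maximal_subgroup[OF maximal] card_group_center)
    then show False
      using three_le_m by (simp only: p_power_le_iff)
  qed
  then have "?T = H"
    using maximal T \<open>H \<subseteq> ?T\<close> unfolding maximal_subgroup_def by blast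
  moreover have "group_center G \<subseteq> ?T"
    using H_carrier by (auto simp: group_center_def centralizer_def)
  ultimately show ?thesis
    by simp
qed

lemma centralizer_eq_abelian_maximal:
  assumes x: "x \<in> H - group_center G"
  shows "centralizer G {x} = H"
proof -
  have xc: "x \<in> carrier G"
    using x subgroup.mem_carrier[OF subgroup_abelian_maximal] by blast
  have "H \<subseteq> centralizer G {x}"
    using abelian x subgroup.subset[OF subgroup_abelian_maximal] by (auto simp: abelian_set_def centralizer_def)
  moreover have "centralizer G {x} \<noteq> carrier G"
    using x xc centralizer_eq_carrier_iff by blast
  ultimately show ?thesis
    using maximal subgroup_centralizer_elem[OF xc] unfolding maximal_subgroup_def by blast
qed

lemma card_centralizer_outside_abelian_maximal:
  assumes g: "g \<in> carrier G - H"
  shows "card (centralizer G {g}) = p ^ (m - 2)"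
proof (rule ccontr)
  let ?M = "centralizer G {g}"
  have gZ: "g \<in> carrier G - group_center G"
    using g group_center_subset_abelian_maximal by blast
  assume "card ?M \<noteq> p ^ (m - 2)"
  then have "card ?M = p ^ (m - 1)"
    using card_centralizer[OF gZ] by blast
  have "H \<inter> ?M \<subseteq> group_center G"
  proof
    fix y assume y: "y \<in> H \<inter> ?M"
    show "y \<in> group_center G"
    proof (rule ccontr)
      assume "y \<notin> group_center G"
      then have "centralizer G {y} = H"
        using y centralizer_eq_abelian_maximal by blast
      moreover have "g \<in> centralizer G {y}"
        using y g by (auto simp: centralizer_def)
      ultimately show False
        using g by blast
    qed
  qed
  then have "card (H \<inter> ?M) \<le> p ^ (m - 3)"
    using card_mono[OF finite_subgroup[OF subgroup_group_center]] card_group_center by metis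
  obtain k where k: "card H = p ^ k" "card (rcosets H) = p ^ (m - k)"
    using card_subgroup[OF subgroup_abelian_maximal] by metis
  then have "k = m - 1"
    using card_maximal_subgroup[OF maximal] by simp
  then have "card (rcosets H) = p"
    using k(2) three_le_m by (simp add: Suc_diff_le)
  have "p ^ (m - 1) = card ?M"
    using \<open>card ?M = p ^ (m - 1)\<close> ..
  also have "\<dots> \<le> card (rcosets H) * card (H \<inter> ?M)"
    using card_subgroup_le_index_mult_card_inter[OF finite_G subgroup_abelian_maximal] gZ
      subgroup_centralizer_elem by blast
  also have "\<dots> \<le> p * p ^ (m - 3)"
    using \<open>card (rcosets H) = p\<close> \<open>card (H \<inter> ?M) \<le> p ^ (m - 3)\<close> by simp
  also have "\<dots> = p ^ (m - 2)"
    by (rule p_mult_power_m_minus(1))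
  finally show False
    using three_le_m by (simp only: p_power_le_iff)
qed

lemma beta_Suc_abelian_maximal:
  "(of_nat (beta G (Suc n)) :: rat)
     = of_nat p powi (int m - 3) * of_nat (beta G n)
       + ((of_nat p powi (int m - 2) - of_nat p powi (int m - 4)) * (of_nat p powi (int m - 1)) ^ n
          + (of_nat p powi (int m - 2) - of_nat p powi (int m - 3)) * (of_nat p powi (int m - 2)) ^ n)"
proof -
  let ?x = "of_nat p :: rat"
  let ?q = "?x powi (int m - 5)" and ?b = "\<lambda>n. (of_nat (beta G n) :: rat)"
  let ?Z = "group_center G" and ?c = "\<lambda>g. card (centralizer G {g}) ^ Suc n"
  have H_carrier: "H \<subseteq> carrier G"
    using subgroup.subset[OF subgroup_abelian_maximal] .
  have "carrier G - ?Z = (H - ?Z) \<union> (carrier G - H)"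
    using H_carrier group_center_subset_abelian_maximal by blast
  then have "(\<Sum>g \<in> carrier G - ?Z. ?c g) = (\<Sum>g \<in> H - ?Z. ?c g) + (\<Sum>g \<in> carrier G - H. ?c g)"
    using finite_subgroup[OF subgroup_abelian_maximal] finite_G by (simp only:) (intro sum.union_disjoint; auto)
  also have "(\<Sum>g \<in> H - ?Z. ?c g) = (p ^ (m - 1) - p ^ (m - 3)) * (p ^ (m - 1)) ^ Suc n"
  proof -
    have "card (H - ?Z) = p ^ (m - 1) - p ^ (m - 3)"
      using card_Diff_subset[OF finite_subgroup[OF subgroup_group_center] group_center_subset_abelian_maximal]
        card_maximal_subgroup[OF maximal] card_group_center by simp
    then show ?thesis
      using centralizer_eq_abelian_maximal card_maximal_subgroup[OF maximal] by simp
  qed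
  also have "(\<Sum>g \<in> carrier G - H. ?c g) = (p ^ m - p ^ (m - 1)) * (p ^ (m - 2)) ^ Suc n"
  proof -
    have "card (carrier G - H) = p ^ m - p ^ (m - 1)"
      using card_Diff_subset[OF finite_subgroup[OF subgroup_abelian_maximal] H_carrier]
        card_maximal_subgroup[OF maximal] card_carrier by simp
    then show ?thesis
      using card_centralizer_outside_abelian_maximal by simp
  qed
  finally have "beta G (Suc n) * p ^ m = p ^ (m - 3) * (beta G n * p ^ m)
      + ((p ^ (m - 1) - p ^ (m - 3)) * (p ^ (m - 1)) ^ Suc n + (p ^ m - p ^ (m - 1)) * (p ^ (m - 2)) ^ Suc n)"
    using beta_Suc_mult_order by simp
  then have "(of_nat (beta G (Suc n) * p ^ m) :: rat) = of_nat (p ^ (m - 3) * (beta G n * p ^ m)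
      + ((p ^ (m - 1) - p ^ (m - 3)) * (p ^ (m - 1)) ^ Suc n + (p ^ m - p ^ (m - 1)) * (p ^ (m - 2)) ^ Suc n))"
    by (rule arg_cong)
  then have "?b (Suc n) * (?q * ?x ^ 5) = ?q * ?x ^ 2 * (?b n * (?q * ?x ^ 5))
      + ((?q * ?x ^ 4 - ?q * ?x ^ 2) * (?q * ?x ^ 4) ^ Suc n + (?q * ?x ^ 5 - ?q * ?x ^ 4) * (?q * ?x ^ 3) ^ Suc n)"
    using p_power_m_minus[of 0] p_power_m_minus[of 1] p_power_m_minus[of 2] p_power_m_minus[of 3]
    by (simp add: of_nat_diff)
  moreover have "(?q * ?x ^ 2 * ?b n + ((?q * ?x ^ 3 - ?q * ?x) * (?q * ?x ^ 4) ^ n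
        + (?q * ?x ^ 3 - ?q * ?x ^ 2) * (?q * ?x ^ 3) ^ n)) * (?q * ?x ^ 5)
      = ?q * ?x ^ 2 * (?b n * (?q * ?x ^ 5))
        + ((?q * ?x ^ 4 - ?q * ?x ^ 2) * (?q * ?x ^ 4) ^ Suc n + (?q * ?x ^ 5 - ?q * ?x ^ 4) * (?q * ?x ^ 3) ^ Suc n)"
    by (simp add: algebra_simps, simp add: numeral_eq_Suc)
  moreover have "?q * ?x ^ 5 \<noteq> 0"
    using one_less_p by simp
  ultimately have "?b (Suc n) = ?q * ?x ^ 2 * ?b n
      + ((?q * ?x ^ 3 - ?q * ?x) * (?q * ?x ^ 4) ^ n + (?q * ?x ^ 3 - ?q * ?x ^ 2) * (?q * ?x ^ 3) ^ n)"
    by (metis mult_right_cancel)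
  then show ?thesis
    using p_powi_m_minus[of 1] p_powi_m_minus[of 2] p_powi_m_minus[of 3] p_powi_m_minus[of 4] by simp
qed

end

end

theorem theorem8p3:
  fixes G :: "('a, 'b) monoid_scheme" and p m :: nat
  assumes "group G" and "Factorial_Ring.prime p" and "finite (carrier G)"
    and "order G = p ^ m"
    and "card (rcosets\<^bsub>G\<^esub> (group_center G)) = p ^ 3"
  shows "(\<not> (\<exists>H. maximal_subgroup H G \<and> abelian_set H G) \<longrightarrow>
           B_series G =
             (1 - fps_const ((of_nat p :: rat) powi (int m - 5)) * fps_X) /
             ((1 - fps_const ((of_nat p :: rat) powi (int m - 2)) * fps_X) *
              (1 - fps_const ((of_nat p :: rat) powi (int m - 3)) * fps_X)))
       \<and> ((\<exists>H. maximal_subgroup H G \<and> abelian_set H G) \<longrightarrow>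
           B_series G =
             (1 / (1 - fps_const ((of_nat p :: rat) powi (int m - 3)) * fps_X)) *
             (1 + fps_const ((of_nat p :: rat) powi (int m - 2) - (of_nat p :: rat) powi (int m - 4)) * fps_X
                    / (1 - fps_const ((of_nat p :: rat) powi (int m - 1)) * fps_X)
                + fps_const ((of_nat p :: rat) powi (int m - 2) - (of_nat p :: rat) powi (int m - 3)) * fps_X
                    / (1 - fps_const ((of_nat p :: rat) powi (int m - 2)) * fps_X)))"
proof -
  interpret center_index_p3 G p m
    by (intro center_index_p3.intro p_group.intro p_group_axioms.intro center_index_p3_axioms.intro assms)
  have beta_0: "(of_nat (beta G 0) :: rat) = 1"
    by (simp add: beta_0)
  show ?thesis
  proof (intro conjI impI)
    assume "\<not> (\<exists>H. maximal_subgroup H G \<and> abelian_set H G)"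
    then show "B_series G =
        (1 - fps_const ((of_nat p :: rat) powi (int m - 5)) * fps_X) /
        ((1 - fps_const ((of_nat p :: rat) powi (int m - 2)) * fps_X) *
         (1 - fps_const ((of_nat p :: rat) powi (int m - 3)) * fps_X))"
      unfolding B_series_def by (intro fps_recurrence_geometric beta_0 beta_Suc_no_abelian_maximal)
  next
    assume "\<exists>H. maximal_subgroup H G \<and> abelian_set H G"
    then obtain H where "maximal_subgroup H G" "abelian_set H G"
      by blast
    then show "B_series G =
        (1 / (1 - fps_const ((of_nat p :: rat) powi (int m - 3)) * fps_X)) *
        (1 + fps_const ((of_nat p :: rat) powi (int m - 2) - (of_nat p :: rat) powi (int m - 4)) * fps_X
               / (1 - fps_const ((of_nat p :: rat) powi (int m - 1)) * fps_X)
           + fps_const ((of_nat p :: rat) powi (int m - 2) - (of_nat p :: rat) powi (int m - 3)) * fps_X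
               / (1 - fps_const ((of_nat p :: rat) powi (int m - 2)) * fps_X))"
      unfolding B_series_def by (intro fps_recurrence_two_geometric beta_0 beta_Suc_abelian_maximal)
  qed
qed

end
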